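(* Suppose $(f_1,\dots,f_K,L^{\mathrm{same}})$ and $(\hat f_1,\dots,\hat f_K,\hat L^{\mathrm{same}})$ both arise from the construction below (with the same dataset size $N$, possibly different subpopulations and learning algorithms), and both satisfy the Conservation Condition, i.e. $(f_1,\dots,f_K)=\nabla L^{\mathrm{same}}$ and $(\hat f_1,\dots,\hat f_K)=\nabla\hat L^{\mathrm{same}}$ on $\mathbb{R}^K_{\ge0}\setminus\{\mathbf{0}\}$. If $f_i=\hat f_i$ for some $i\in[K]$, then for every $k\neq i$ there is a constant $C_k$ with $f_k({\bm{p}})=\hat f_k({\bm{p}})+C_k$ for all ${\bm{p}}\in\mathbb{R}^K_{\ge0}\setminus\{\mathbf{0}\}$.
   Context: Construction: given distributions $\mathcal{D}_1,\dots,\mathcal{D}_K$ on $\mathcal{Z}$, a loss $\ell(h,{\bm{z}})$ (all expectations finite), and a learning algorithm $\mathcal{A}:\mathcal{Z}^N\to\mathcal{H}$, for ${\bm{r}}\in\Delta_K=\{{\bm{r}}\ge0:\sum_kr_k=1\}$ let $\bar e_k({\bm{r}})=\mathbb{E}_{S\sim(\sum_jr_j\mathcal{D}_j)^N}\mathbb{E}_{{\bm{z}}\sim\mathcal{D}_k}[\ell(\mathcal{A}(S),{\bm{z}})]$, $f_k({\bm{p}})=\bar e_k({\bm{p}}/|{\bm{p}}|)$ for ${\bm{p}}\in\mathbb{R}^K_{\ge0}\setminus\{\mathbf{0}\}$ with $|{\bm{p}}|=\sum_jp_j$, and $L^{\mathrm{same}}({\bm{p}})=\sum_kp_kf_k({\bm{p}})$.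 *)

theory Defs
  imports "HOL-Probability.Probability"
begin

text \<open>Subpopulations are indexed by a finite type 'k (so K = CARD('k)); vectors
  p in R^K are elements of real^'k.  Data points live in a measurable space Mz;
  datasets of size N are functions nat => 'z on the index set {..<N}.\<close>

definition prob_simplex :: "(real^'k::finite) set" where
  "prob_simplex = {r. (\<forall>j. 0 \<le> r $ j) \<and> (\<Sum>j\<in>UNIV. r $ j) = 1}"

definition nonneg_nonzero :: "(real^'k::finite) set" where
  "nonneg_nonzero = {p. (\<forall>j. 0 \<le> p $ j) \<and> p \<noteq> 0}"

definition mixture :: "'z measure \<Rightarrow> ('k::finite \<Rightarrow> 'z measure) \<Rightarrow> real^'k \<Rightarrow> 'z measure" where
  "mixture Mz D r = measure_of (space Mz) (sets Mz)
      (\<lambda>B. \<Sum>j\<in>UNIV. ennreal (r $ j) * emeasure (D j) B)"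

definition ebar :: "'z measure \<Rightarrow> ('k::finite \<Rightarrow> 'z measure) \<Rightarrow> ('h \<Rightarrow> 'z \<Rightarrow> real)
     \<Rightarrow> ((nat \<Rightarrow> 'z) \<Rightarrow> 'h) \<Rightarrow> nat \<Rightarrow> 'k \<Rightarrow> real^'k \<Rightarrow> real" where
  "ebar Mz D loss A N k r =
     (\<integral>S. (\<integral>z. loss (A S) z \<partial>(D k)) \<partial>(PiM {..<N} (\<lambda>_. mixture Mz D r)))"

definition fk :: "'z measure \<Rightarrow> ('k::finite \<Rightarrow> 'z measure) \<Rightarrow> ('h \<Rightarrow> 'z \<Rightarrow> real)
     \<Rightarrow> ((nat \<Rightarrow> 'z) \<Rightarrow> 'h) \<Rightarrow> nat \<Rightarrow> 'k \<Rightarrow> real^'k \<Rightarrow> real" where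
  "fk Mz D loss A N k p = ebar Mz D loss A N k ((1 / (\<Sum>j\<in>UNIV. p $ j)) *\<^sub>R p)"

definition Lsame :: "('k::finite \<Rightarrow> real^'k \<Rightarrow> real) \<Rightarrow> real^'k \<Rightarrow> real" where
  "Lsame f p = (\<Sum>k\<in>UNIV. p $ k * f k p)"

definition valid_construction :: "'z measure \<Rightarrow> ('k::finite \<Rightarrow> 'z measure) \<Rightarrow> ('h \<Rightarrow> 'z \<Rightarrow> real)
     \<Rightarrow> ((nat \<Rightarrow> 'z) \<Rightarrow> 'h) \<Rightarrow> nat \<Rightarrow> bool" where
  "valid_construction Mz D loss A N \<longleftrightarrow>
     (\<forall>k. prob_space (D k) \<and> sets (D k) = sets Mz) \<and>
     (\<forall>r\<in>prob_simplex. \<forall>k.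
        (\<forall>S\<in>space (PiM {..<N} (\<lambda>_. mixture Mz D r)). integrable (D k) (\<lambda>z. loss (A S) z)) \<and>
        integrable (PiM {..<N} (\<lambda>_. mixture Mz D r)) (\<lambda>S. \<integral>z. loss (A S) z \<partial>(D k)))"

text \<open>Conservation Condition: (f_1,...,f_K) is the gradient of L^same at every point of
  R^K_{>=0} \ {0} (derivative taken within that domain, i.e. one-sided on the boundary).\<close>
definition conservation :: "('k::finite \<Rightarrow> real^'k \<Rightarrow> real) \<Rightarrow> bool" where
  "conservation f \<longleftrightarrow>
     (\<forall>p\<in>nonneg_nonzero. (Lsame f has_derivative (\<lambda>h. (\<chi> k. f k p) \<bullet> h)) (at p within nonneg_nonzero))"

end

theory Submission
  imports Defs
begin

text \<open>Each f_k(p) depends only on p / |p|, so L^same is positively homogeneous of degree one,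
  and so is the potential M of the difference field g = f - f'. Since g_i = 0, M is constant
  along the ray direction e_i; homogeneity then gives M(e_i) = 0 and
  M(e_i + t p) = t M(p + e_i / t) = t M(p), so differentiating at e_i shows that M is the
  linear function p \<mapsto> g(e_i) \<bullet> p on the cone. The gradient g of a linear function is constant.\<close>

lemma has_derivative_const_on_ray:
  fixes F :: "'a::real_normed_vector \<Rightarrow> real"
  assumes ray: "\<And>s. 0 \<le> s \<Longrightarrow> p + s *\<^sub>R d \<in> S"
    and deriv: "\<And>x. x \<in> S \<Longrightarrow> (F has_derivative F' x) (at x within S)"
    and flat: "\<And>x. x \<in> S \<Longrightarrow> F' x d = 0"
    and "0 \<le> s"
  shows "F (p + s *\<^sub>R d) = F p"
proof -
  have "((\<lambda>s. F (p + s *\<^sub>R d)) has_derivative (\<lambda>_. 0)) (at s within {0..})" if s: "s \<in> {0..}" for s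
  proof -
    have line: "((\<lambda>t::real. p + t *\<^sub>R d) has_derivative (\<lambda>h. h *\<^sub>R d)) (at s within {0..})"
      by (auto intro!: derivative_eq_intros)
    have "((\<lambda>t. F (p + t *\<^sub>R d)) has_derivative (\<lambda>h. F' (p + s *\<^sub>R d) (h *\<^sub>R d))) (at s within {0..})"
      by (rule has_derivative_in_compose2[OF deriv _ s line]) (use ray in auto)
    moreover have "F' (p + s *\<^sub>R d) (h *\<^sub>R d) = 0" for h
      using s ray flat linear_scale[OF has_derivative_linear[OF deriv]] by simp
    ultimately show ?thesis by simp
  qed
  then obtain c where "\<forall>s\<in>{0..}. F (p + s *\<^sub>R d) = c"
    using has_derivative_zero_constant[of "{0::real..}"] by (metis convex_real_interval(1))
  then show ?thesis using \<open>0 \<le> s\<close> by (metis atLeast_iff order_refl scale_zero_left add_0_right)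
qed

lemma has_derivative_affine_on_segment:
  fixes F :: "'a::real_normed_vector \<Rightarrow> real"
  assumes deriv: "(F has_derivative F') (at q within S)"
    and segment: "\<And>t. t \<in> {0..1} \<Longrightarrow> q + t *\<^sub>R d \<in> S"
    and affine: "\<And>t. t \<in> {0..1} \<Longrightarrow> F (q + t *\<^sub>R d) = a + t * b"
  shows "F' d = b"
proof -
  have line: "((\<lambda>t::real. q + t *\<^sub>R d) has_derivative (\<lambda>h. h *\<^sub>R d)) (at 0 within {0..1})"
    by (auto intro!: derivative_eq_intros)
  have "((\<lambda>t. F (q + t *\<^sub>R d)) has_derivative (\<lambda>h. F' (h *\<^sub>R d))) (at 0 within {0..1})"
    using segment by (intro has_derivative_in_compose[OF line]) (auto intro: has_derivative_subset[OF deriv])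
  moreover have "((\<lambda>t. F (q + t *\<^sub>R d)) has_derivative (\<lambda>h. h * b)) (at 0 within {0..1})"
    by (rule has_derivative_transform[where f = "\<lambda>t. a + t * b"])
      (auto simp: affine intro!: derivative_eq_intros)
  ultimately have "(\<lambda>h. F' (h *\<^sub>R d)) = (\<lambda>h. h * b)"
    using frechet_derivative_unique_within_closed_interval[of 0 1 0 "\<lambda>t. F (q + t *\<^sub>R d)"]
    by auto
  then show ?thesis by (metis mult_1 scale_one)
qed

lemma nonneg_nonzero_add:
  fixes p d :: "real^'k::finite"
  assumes "p \<in> nonneg_nonzero" "\<forall>j. 0 \<le> d $ j"
  shows "p + d \<in> nonneg_nonzero"
proof -
  have p: "\<forall>j. 0 \<le> p $ j" "p \<noteq> 0" using assms(1) by (auto simp: nonneg_nonzero_def)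
  have "p + d \<noteq> 0"
  proof
    assume "p + d = 0"
    then have "\<forall>j. p $ j = 0" using p(1) assms(2) by (metis add_nonneg_eq_0_iff vector_add_component zero_index)
    then show False using p(2) by (simp add: vec_eq_iff)
  qed
  then show ?thesis using p(1) assms(2) by (simp add: nonneg_nonzero_def)
qed

lemma nonneg_nonzero_add_scaleR:
  fixes p d :: "real^'k::finite"
  assumes "p \<in> nonneg_nonzero" "\<forall>j. 0 \<le> d $ j" "0 \<le> s"
  shows "p + s *\<^sub>R d \<in> nonneg_nonzero"
  using nonneg_nonzero_add[OF assms(1)] assms(2,3) by simp

lemma axis_in_nonneg_nonzero: "(axis i (1::real) :: real^'k::finite) \<in> nonneg_nonzero"
  by (auto simp: nonneg_nonzero_def axis_def vec_eq_iff)

lemma fk_scaleR: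
  assumes "0 < t"
  shows "fk Mz D loss A N k (t *\<^sub>R p) = fk Mz D loss A N k p"
proof -
  have "(\<Sum>j\<in>UNIV. (t *\<^sub>R p) $ j) = t * (\<Sum>j\<in>UNIV. p $ j)"
    by (simp add: sum_distrib_left)
  then have "(1 / (\<Sum>j\<in>UNIV. (t *\<^sub>R p) $ j)) *\<^sub>R (t *\<^sub>R p) = (1 / (\<Sum>j\<in>UNIV. p $ j)) *\<^sub>R p"
    using assms by simp
  then show ?thesis unfolding fk_def by (simp only:)
qed

lemma Lsame_scaleR:
  assumes "\<And>k. f k (t *\<^sub>R p) = f k p"
  shows "Lsame f (t *\<^sub>R p) = t * Lsame f p"
  unfolding Lsame_def by (simp add: assms sum_distrib_left mult.assoc)

lemma Lsame_diff: "Lsame (\<lambda>k p. f k p - f' k p) = (\<lambda>p. Lsame f p - Lsame f' p)"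
  unfolding Lsame_def by (simp add: right_diff_distrib sum_subtractf)

lemma conservation_diff:
  fixes f f' :: "'k::finite \<Rightarrow> real^'k \<Rightarrow> real"
  assumes "conservation f" "conservation f'"
  shows "conservation (\<lambda>k p. f k p - f' k p)"
  unfolding conservation_def
proof
  fix p :: "real^'k" assume p: "p \<in> nonneg_nonzero"
  have "((\<lambda>q. Lsame f q - Lsame f' q) has_derivative
         (\<lambda>h. (\<chi> k. f k p) \<bullet> h - (\<chi> k. f' k p) \<bullet> h)) (at p within nonneg_nonzero)"
    using assms p unfolding conservation_def by (intro has_derivative_diff) auto
  moreover have "(\<chi> k. f k p - f' k p) = (\<chi> k. f k p) - (\<chi> k. f' k p)"
    by (simp add: vec_eq_iff)
  ultimately show "(Lsame (\<lambda>k p. f k p - f' k p) has_derivative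
         (\<lambda>h. (\<chi> k. f k p - f' k p) \<bullet> h)) (at p within nonneg_nonzero)"
    by (simp add: Lsame_diff inner_diff_left)
qed

lemma Lsame_eq_inner_of_vanishing_component:
  fixes g :: "'k::finite \<Rightarrow> real^'k \<Rightarrow> real"
  assumes cons: "conservation g"
    and scale: "\<And>k t p. 0 < t \<Longrightarrow> g k (t *\<^sub>R p) = g k p"
    and vanish: "\<forall>p\<in>nonneg_nonzero. g i p = 0"
    and p: "p \<in> nonneg_nonzero"
  shows "Lsame g p = (\<chi> k. g k (axis i 1)) \<bullet> p"
proof -
  let ?e = "axis i 1 :: real^'k"
  have deriv: "(Lsame g has_derivative (\<lambda>h. (\<chi> k. g k x) \<bullet> h)) (at x within nonneg_nonzero)"
    if "x \<in> nonneg_nonzero" for x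
    using cons that unfolding conservation_def by blast
  have homog: "Lsame g (t *\<^sub>R x) = t * Lsame g x" if "0 < t" for t x
    using Lsame_scaleR scale[OF that] by blast
  have e_in: "?e \<in> nonneg_nonzero" by (rule axis_in_nonneg_nonzero)
  have e_nonneg: "\<forall>j. 0 \<le> ?e $ j" by (simp add: axis_def)
  have ray: "Lsame g (x + s *\<^sub>R ?e) = Lsame g x" if x: "x \<in> nonneg_nonzero" and "0 \<le> s" for x s
    using nonneg_nonzero_add_scaleR[OF x e_nonneg] vanish
    by (intro has_derivative_const_on_ray[OF _ deriv _ \<open>0 \<le> s\<close>]) (auto simp: inner_axis)
  have "Lsame g ?e = Lsame g (2 *\<^sub>R ?e)"
    using ray[OF e_in, of 1] by (simp add: scaleR_2)
  then have e_zero: "Lsame g ?e = 0" using homog[of 2 ?e] by simp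
  have p_nonneg: "\<forall>j. 0 \<le> p $ j" using p by (simp add: nonneg_nonzero_def)
  show ?thesis
  proof (rule has_derivative_affine_on_segment[OF deriv[OF e_in], where a = 0, symmetric])
    show "?e + t *\<^sub>R p \<in> nonneg_nonzero" if "t \<in> {0..1}" for t
      using nonneg_nonzero_add_scaleR[OF e_in p_nonneg] that by simp
    show "Lsame g (?e + t *\<^sub>R p) = 0 + t * Lsame g p" if t: "t \<in> {0..1}" for t
    proof (cases "t = 0")
      case True
      then show ?thesis using e_zero by simp
    next
      case False
      then have "0 < t" using t by simp
      then have "?e + t *\<^sub>R p = t *\<^sub>R (p + (1 / t) *\<^sub>R ?e)" by (simp add: algebra_simps)
      then show ?thesis using homog[OF \<open>0 < t\<close>] ray[OF p, of "1 / t"] \<open>0 < t\<close> by simp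
    qed
  qed
qed

lemma conservation_const_of_vanishing_component:
  fixes g :: "'k::finite \<Rightarrow> real^'k \<Rightarrow> real"
  assumes cons: "conservation g"
    and scale: "\<And>k t p. 0 < t \<Longrightarrow> g k (t *\<^sub>R p) = g k p"
    and vanish: "\<forall>p\<in>nonneg_nonzero. g i p = 0"
    and p: "p \<in> nonneg_nonzero"
  shows "g k p = g k (axis i 1)"
proof -
  let ?c = "\<chi> k. g k (axis i 1)"
  have d_nonneg: "\<forall>j. 0 \<le> (axis k 1 :: real^'k) $ j" by (simp add: axis_def)
  have deriv: "(Lsame g has_derivative (\<lambda>h. (\<chi> j. g j p) \<bullet> h)) (at p within nonneg_nonzero)"
    using cons p unfolding conservation_def by blast
  have "(\<chi> j. g j p) \<bullet> axis k 1 = ?c $ k"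
  proof (rule has_derivative_affine_on_segment[OF deriv, where a = "?c \<bullet> p"])
    show segment: "p + t *\<^sub>R axis k 1 \<in> nonneg_nonzero" if "t \<in> {0..1}" for t
      using nonneg_nonzero_add_scaleR[OF p d_nonneg] that by simp
    show "Lsame g (p + t *\<^sub>R axis k 1) = ?c \<bullet> p + t * ?c $ k" if "t \<in> {0..1}" for t
      using Lsame_eq_inner_of_vanishing_component[OF cons scale vanish segment[OF that]]
      by (simp add: inner_add_right inner_axis)
  qed
  then show ?thesis by (simp add: inner_axis)
qed

theorem lemmaB4:
  fixes Mz :: "'z measure" and D :: "'k::finite \<Rightarrow> 'z measure"
    and loss :: "'h \<Rightarrow> 'z \<Rightarrow> real" and A :: "(nat \<Rightarrow> 'z) \<Rightarrow> 'h"
    and Mz' :: "'y measure" and D' :: "'k \<Rightarrow> 'y measure"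
    and loss' :: "'g \<Rightarrow> 'y \<Rightarrow> real" and A' :: "(nat \<Rightarrow> 'y) \<Rightarrow> 'g"
    and N :: nat and i :: 'k
  assumes "valid_construction Mz D loss A N"
    and "valid_construction Mz' D' loss' A' N"
    and "conservation (fk Mz D loss A N)"
    and "conservation (fk Mz' D' loss' A' N)"
    and "\<forall>p\<in>nonneg_nonzero. fk Mz D loss A N i p = fk Mz' D' loss' A' N i p"
  shows "\<forall>k. k \<noteq> i \<longrightarrow> (\<exists>C. \<forall>p\<in>nonneg_nonzero.
           fk Mz D loss A N k p = fk Mz' D' loss' A' N k p + C)"
proof (intro allI impI)
  fix k
  define g where "g j p = fk Mz D loss A N j p - fk Mz' D' loss' A' N j p" for j p
  have "conservation g"
    unfolding g_def using conservation_diff assms(3,4) by blast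
  moreover have "g j (t *\<^sub>R p) = g j p" if "0 < t" for j t p
    unfolding g_def by (simp add: fk_scaleR[OF that])
  moreover have "\<forall>p\<in>nonneg_nonzero. g i p = 0"
    unfolding g_def using assms(5) by simp
  ultimately have "\<forall>p\<in>nonneg_nonzero. g k p = g k (axis i 1)"
    using conservation_const_of_vanishing_component by blast
  then show "\<exists>C. \<forall>p\<in>nonneg_nonzero. fk Mz D loss A N k p = fk Mz' D' loss' A' N k p + C"
    by (intro exI[of _ "g k (axis i 1)"]) (simp add: g_def algebra_simps)
qed

end
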